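(* Let $L$ be a $c$-lattice and $S$ a multiplicatively closed subset of $L$ (with $1\in S$, $0\notin S$), and let $p\in L$. If $q_1,\dots,q_n$ are $S$-$p$-primary elements of $L$, then $\bigwedge_{i=1}^n q_i$ is an $S$-$p$-primary element of $L$.
   Context: A multiplicative lattice is a complete lattice with a commutative, associative multiplication distributing over arbitrary joins, with $1$ as identity; $L_*$ is the set of compact elements. A $c$-lattice is a compactly generated multiplicative lattice with $1$ compact in which the product of two compact elements is compact. A multiplicatively closed subset is a nonempty $S\subseteq L_*$ closed under multiplication. $\sqrt a=\bigvee\{x\in L_*\mid x^n\le a\text{ for some }n\in\mathbb{Z}^+\}$. A proper element $p$ with $t\not\le p$ for all $t\in S$ is $S$-prime if there is $s\in S$ such that $ab\le p$ implies $sa\le p$ or $sb\le p$ for all $a,b$. A proper element $q$ with $t\not\le q$ for all $t\in S$ is $S$-primary if there is $s\in S$ such that $cd\le q$ implies $sc\le q$ or $sd\le\sqrt q$ for all $c,d\in L$; it is $S$-$p$-primary if moreover $\sqrt q=p$ and $p$ is $S$-prime. *)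

theory Defs
  imports Main
begin

text \<open>A multiplicative lattice: a complete lattice 'a with a multiplication m that is
commutative, associative, distributes over arbitrary joins, and has the top element
(the element 1 of the paper) as identity.\<close>

definition mult_lattice :: "('a::complete_lattice \<Rightarrow> 'a \<Rightarrow> 'a) \<Rightarrow> bool" where
  "mult_lattice m \<longleftrightarrow>
     (\<forall>a b. m a b = m b a) \<and>
     (\<forall>a b c. m (m a b) c = m a (m b c)) \<and>
     (\<forall>a X. m a (Sup X) = Sup ((\<lambda>x. m a x) ` X)) \<and>
     (\<forall>a. m top a = a)"

definition compact_el :: "'a::complete_lattice \<Rightarrow> bool" where
  "compact_el x \<longleftrightarrow> (\<forall>X. x \<le> Sup X \<longrightarrow> (\<exists>F. finite F \<and> F \<subseteq> X \<and> x \<le> Sup F))"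

definition c_lattice where
  "c_lattice (m :: 'a::complete_lattice \<Rightarrow> 'a \<Rightarrow> 'a) \<longleftrightarrow> mult_lattice m \<and>
     (\<forall>a::'a. a = Sup {x. compact_el x \<and> x \<le> a}) \<and>
     compact_el (top :: 'a) \<and>
     (\<forall>x y. compact_el x \<longrightarrow> compact_el y \<longrightarrow> compact_el (m x y))"

definition mult_closed :: "('a::complete_lattice \<Rightarrow> 'a \<Rightarrow> 'a) \<Rightarrow> 'a set \<Rightarrow> bool" where
  "mult_closed m S \<longleftrightarrow> S \<noteq> {} \<and> (\<forall>s\<in>S. compact_el s) \<and> (\<forall>s\<in>S. \<forall>t\<in>S. m s t \<in> S)"

primrec mpow :: "('a::complete_lattice \<Rightarrow> 'a \<Rightarrow> 'a) \<Rightarrow> 'a \<Rightarrow> nat \<Rightarrow> 'a" where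
  "mpow m x 0 = top"
| "mpow m x (Suc n) = m x (mpow m x n)"

definition lrad :: "('a::complete_lattice \<Rightarrow> 'a \<Rightarrow> 'a) \<Rightarrow> 'a \<Rightarrow> 'a" where
  "lrad m a = Sup {x. compact_el x \<and> (\<exists>n::nat. n \<ge> 1 \<and> mpow m x n \<le> a)}"

definition S_prime :: "('a::complete_lattice \<Rightarrow> 'a \<Rightarrow> 'a) \<Rightarrow> 'a set \<Rightarrow> 'a \<Rightarrow> bool" where
  "S_prime m S p \<longleftrightarrow> p \<noteq> top \<and> (\<forall>t\<in>S. \<not> t \<le> p) \<and>
     (\<exists>s\<in>S. \<forall>a b. m a b \<le> p \<longrightarrow> m s a \<le> p \<or> m s b \<le> p)"

definition S_primary :: "('a::complete_lattice \<Rightarrow> 'a \<Rightarrow> 'a) \<Rightarrow> 'a set \<Rightarrow> 'a \<Rightarrow> bool" where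
  "S_primary m S q \<longleftrightarrow> q \<noteq> top \<and> (\<forall>t\<in>S. \<not> t \<le> q) \<and>
     (\<exists>s\<in>S. \<forall>c d. m c d \<le> q \<longrightarrow> m s c \<le> q \<or> m s d \<le> lrad m q)"

definition S_p_primary :: "('a::complete_lattice \<Rightarrow> 'a \<Rightarrow> 'a) \<Rightarrow> 'a set \<Rightarrow> 'a \<Rightarrow> 'a \<Rightarrow> bool" where
  "S_p_primary m S p q \<longleftrightarrow> S_primary m S q \<and> lrad m q = p \<and> S_prime m S p"

end

theory Submission
  imports Defs
begin

text \<open>Let q_1, ..., q_n be S-primary with common radical p, with witnesses s_i \<in> S, and
let s \<in> S lie below all s_i (a product of them). If c d \<le> q_1 \<sqinter> ... \<sqinter> q_n, then either some
s_i d \<le> p, whence s d \<le> p, or s_i c \<le> q_i for every i, whence s c \<le> q_1 \<sqinter> ... \<sqinter> q_n.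
It remains to see that the radical commutes with finite meets. A compact x lies below the
radical of a exactly when some power of x lies below a: by compactness x lies below a
finite join of such elements, and (u \<squnion> v)^(r+s) \<le> u^r \<squnion> v^s.\<close>

lemma mult_lattice_comm: "mult_lattice m \<Longrightarrow> m a b = m b a"
  unfolding mult_lattice_def by blast

lemma mult_lattice_top_left: "mult_lattice m \<Longrightarrow> m top a = a"
  unfolding mult_lattice_def by blast

lemma mult_lattice_sup_distrib:
  assumes "mult_lattice m"
  shows "m a (sup b c) = sup (m a b) (m a c)"
proof -
  have "m a (Sup {b, c}) = Sup (m a ` {b, c})"
    using assms unfolding mult_lattice_def by blast
  then show ?thesis by simp
qed

lemma mult_lattice_bot_right:
  assumes "mult_lattice m"
  shows "m a bot = bot"
proof -
  have "m a (Sup {}) = Sup (m a ` {})"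
    using assms unfolding mult_lattice_def by blast
  then show ?thesis by simp
qed

lemma mult_lattice_mono_right:
  assumes "mult_lattice m" "a \<le> b"
  shows "m c a \<le> m c b"
  using mult_lattice_sup_distrib[OF assms(1), of c a b] assms(2)
  by (metis sup.absorb2 sup.cobounded1)

lemma mult_lattice_mono:
  assumes "mult_lattice m" "a \<le> b" "c \<le> d"
  shows "m a c \<le> m b d"
  using mult_lattice_mono_right[OF assms(1,2), of d] mult_lattice_mono_right[OF assms(1,3), of a]
    mult_lattice_comm[OF assms(1)] by (metis order_trans)

lemma mult_lattice_le_right:
  assumes "mult_lattice m"
  shows "m a b \<le> b"
  using mult_lattice_mono[OF assms, of a top b b] mult_lattice_top_left[OF assms] by simp

lemma mult_lattice_le_left:
  assumes "mult_lattice m"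
  shows "m a b \<le> a"
  using mult_lattice_le_right[OF assms, of b a] mult_lattice_comm[OF assms] by metis

lemma mpow_antimono:
  assumes "mult_lattice m" "k \<le> n"
  shows "mpow m x n \<le> mpow m x k"
  using assms(2)
proof (induction n)
  case (Suc n)
  then show ?case
    using mult_lattice_le_right[OF assms(1), of x "mpow m x n"] le_Suc_eq by force
qed simp

lemma mpow_mono:
  assumes "mult_lattice m" "x \<le> y"
  shows "mpow m x k \<le> mpow m y k"
  by (induction k) (auto intro: mult_lattice_mono[OF assms(1)] assms(2))

lemma mpow_sup_le:
  assumes ml: "mult_lattice m"
  shows "mpow m (sup u v) (r + s) \<le> sup (mpow m u r) (mpow m v s)"
proof (induction "r + s" arbitrary: r s)
  case 0
  then show ?case by simp
next
  case (Suc N)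
  consider "r = 0" | "s = 0" | r' s' where "r = Suc r'" "s = Suc s'"
    by (meson not0_implies_Suc)
  then show ?case
  proof cases
    case 3
    let ?X = "mpow m (sup u v) N"
    have "m u ?X \<le> m u (sup (mpow m u r') (mpow m v s))"
      using Suc.hyps(1)[of r' s] Suc.hyps(2) 3 by (simp add: mult_lattice_mono_right[OF ml])
    also have "\<dots> \<le> sup (mpow m u r) (mpow m v s)"
      using 3 by (simp add: mult_lattice_sup_distrib[OF ml] mult_lattice_le_right[OF ml] le_supI2)
    finally have u: "m u ?X \<le> sup (mpow m u r) (mpow m v s)" .
    have "m v ?X \<le> m v (sup (mpow m u r) (mpow m v s'))"
      using Suc.hyps(1)[of r s'] Suc.hyps(2) 3 by (simp add: mult_lattice_mono_right[OF ml])
    also have "\<dots> \<le> sup (mpow m u r) (mpow m v s)"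
      using 3 by (simp add: mult_lattice_sup_distrib[OF ml] mult_lattice_le_right[OF ml] le_supI1)
    finally have v: "m v ?X \<le> sup (mpow m u r) (mpow m v s)" .
    have "mpow m (sup u v) (r + s) = m ?X (sup u v)"
      using Suc.hyps(2) mult_lattice_comm[OF ml] by (metis mpow.simps(2))
    also have "\<dots> = sup (m u ?X) (m v ?X)"
      using mult_lattice_sup_distrib[OF ml] mult_lattice_comm[OF ml] by metis
    finally show ?thesis using u v by simp
  qed simp_all
qed

lemma mpow_Sup_le:
  assumes ml: "mult_lattice m" and "finite F" and "\<forall>y\<in>F. \<exists>k\<ge>1. mpow m y k \<le> a"
  shows "\<exists>k\<ge>1. mpow m (Sup F) k \<le> a"
  using assms(2,3)
proof (induction F rule: finite_induct)
  case empty
  have "mpow m (Sup {}) 1 = bot"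
    using mult_lattice_bot_right[OF ml, of top] mult_lattice_comm[OF ml] by simp
  then show ?case by (metis bot.extremum order.refl)
next
  case (insert y F)
  then obtain i j where "i \<ge> 1" "mpow m y i \<le> a" "j \<ge> 1" "mpow m (Sup F) j \<le> a"
    by auto
  then have "i + j \<ge> 1" "mpow m (sup y (Sup F)) (i + j) \<le> a"
    using mpow_sup_le[OF ml, of y "Sup F" i j] by (auto intro: order_trans)
  then show ?case by auto
qed

lemma compact_le_lrad_iff:
  assumes ml: "mult_lattice m" and x: "compact_el x"
  shows "x \<le> lrad m a \<longleftrightarrow> (\<exists>k\<ge>1. mpow m x k \<le> a)"
proof
  let ?R = "{x. compact_el x \<and> (\<exists>n::nat. n \<ge> 1 \<and> mpow m x n \<le> a)}"
  assume "x \<le> lrad m a"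
  then have "x \<le> Sup ?R" unfolding lrad_def .
  then obtain F where F: "finite F" "F \<subseteq> ?R" "x \<le> Sup F"
    using x unfolding compact_el_def by meson
  have "\<forall>y\<in>F. \<exists>k\<ge>1. mpow m y k \<le> a" using F(2) by blast
  then obtain k where "k \<ge> 1" "mpow m (Sup F) k \<le> a"
    using mpow_Sup_le[OF ml F(1)] by blast
  then show "\<exists>k\<ge>1. mpow m x k \<le> a"
    using mpow_mono[OF ml F(3), of k] by (blast intro: order_trans)
next
  assume "\<exists>k\<ge>1. mpow m x k \<le> a"
  then show "x \<le> lrad m a"
    using x unfolding lrad_def by (blast intro: Sup_upper)
qed

lemma lrad_mono:
  assumes "a \<le> b"
  shows "lrad m a \<le> lrad m b"
  unfolding lrad_def using assms by (blast intro: Sup_subset_mono order_trans)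

lemma lrad_top:
  assumes "c_lattice m"
  shows "lrad m top = top"
proof -
  have "compact_el (top :: 'a)" using assms unfolding c_lattice_def by blast
  then show ?thesis unfolding lrad_def by (auto intro!: top_le Sup_upper exI[of _ 1])
qed

lemma lrad_inf:
  assumes c: "c_lattice m"
  shows "lrad m (inf a b) = inf (lrad m a) (lrad m b)"
proof (rule antisym)
  show "lrad m (inf a b) \<le> inf (lrad m a) (lrad m b)"
    by (simp add: lrad_mono)
  have ml: "mult_lattice m" using c unfolding c_lattice_def by blast
  have "x \<le> lrad m (inf a b)" if x: "compact_el x" "x \<le> inf (lrad m a) (lrad m b)" for x
  proof -
    obtain i j where "i \<ge> 1" "mpow m x i \<le> a" "j \<ge> 1" "mpow m x j \<le> b"
      using x compact_le_lrad_iff[OF ml x(1)] by auto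
    then have "max i j \<ge> 1" "mpow m x (max i j) \<le> inf a b"
      using mpow_antimono[OF ml, of i "max i j" x] mpow_antimono[OF ml, of j "max i j" x]
      by (auto intro: order_trans)
    then show ?thesis using compact_le_lrad_iff[OF ml x(1)] by blast
  qed
  moreover have "y = Sup {x. compact_el x \<and> x \<le> y}" for y :: 'a
    using c unfolding c_lattice_def by blast
  ultimately show "inf (lrad m a) (lrad m b) \<le> lrad m (inf a b)"
    by (metis (mono_tags, lifting) Sup_least mem_Collect_eq)
qed

lemma lrad_INF:
  assumes "c_lattice m" "finite I"
  shows "lrad m (INF i\<in>I. q i) = (INF i\<in>I. lrad m (q i))"
  using assms(2)
  by (induction I rule: finite_induct) (simp_all add: lrad_top[OF assms(1)] lrad_inf[OF assms(1)])

lemma lrad_INF_eq: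
  assumes "c_lattice m" "finite I" "I \<noteq> {}" "\<forall>i\<in>I. lrad m (q i) = p"
  shows "lrad m (INF i\<in>I. q i) = p"
  using lrad_INF[OF assms(1,2)] assms(3,4) by simp

lemma mult_closed_lower_bound:
  assumes ml: "mult_lattice m" and S: "mult_closed m S" and "finite I" "f ` I \<subseteq> S"
  shows "\<exists>s\<in>S. \<forall>i\<in>I. s \<le> f i"
  using assms(3,4)
proof (induction I rule: finite_induct)
  case empty
  then show ?case using S unfolding mult_closed_def by blast
next
  case (insert a I)
  then obtain s where "s \<in> S" "\<forall>i\<in>I. s \<le> f i" by auto
  moreover have "m (f a) s \<in> S" using insert.prems \<open>s \<in> S\<close> S unfolding mult_closed_def by auto
  ultimately show ?case
    using mult_lattice_le_left[OF ml] mult_lattice_le_right[OF ml] by (blast intro: order_trans)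
qed

lemma S_primary_INF:
  assumes c: "c_lattice m" and S: "mult_closed m S" and I: "finite I" "I \<noteq> {}"
    and primary: "\<forall>i\<in>I. S_primary m S (q i)" and rad: "\<forall>i\<in>I. lrad m (q i) = p"
  shows "S_primary m S (INF i\<in>I. q i)"
proof -
  let ?Q = "INF i\<in>I. q i"
  have ml: "mult_lattice m" using c unfolding c_lattice_def by blast
  obtain i\<^sub>0 where "i\<^sub>0 \<in> I" using I(2) by blast
  then have "?Q \<le> q i\<^sub>0" by (rule INF_lower)
  then have proper: "?Q \<noteq> top" "\<forall>t\<in>S. \<not> t \<le> ?Q"
    using primary \<open>i\<^sub>0 \<in> I\<close> unfolding S_primary_def by (auto dest: top_le order_trans)
  have "lrad m ?Q = p" using lrad_INF_eq[OF c I rad] .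
  obtain f where f: "\<forall>i\<in>I. f i \<in> S \<and> (\<forall>c d. m c d \<le> q i \<longrightarrow> m (f i) c \<le> q i \<or> m (f i) d \<le> p)"
    using primary rad unfolding S_primary_def by metis
  then obtain s where s: "s \<in> S" "\<forall>i\<in>I. s \<le> f i"
    using mult_closed_lower_bound[OF ml S I(1), of f] by blast
  have "m s c \<le> ?Q \<or> m s d \<le> lrad m ?Q" if cd: "m c d \<le> ?Q" for c d
  proof (cases "\<exists>i\<in>I. m (f i) d \<le> p")
    case True
    then show ?thesis
      using s \<open>lrad m ?Q = p\<close> mult_lattice_mono[OF ml, of s _ d d] by (blast intro: order_trans)
  next
    case False
    have "m s c \<le> q i" if i: "i \<in> I" for i
    proof -
      have "m c d \<le> q i" using cd INF_lower[OF i, of q] by order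
      then have "m (f i) c \<le> q i" using f i False by blast
      moreover have "m s c \<le> m (f i) c" using s i by (simp add: mult_lattice_mono[OF ml])
      ultimately show ?thesis by order
    qed
    then show ?thesis by (simp add: le_INF_iff)
  qed
  then show ?thesis using proper s(1) unfolding S_primary_def by blast
qed

theorem mainTheorem8:
  fixes m :: "'a::complete_lattice \<Rightarrow> 'a \<Rightarrow> 'a"
    and S :: "'a set" and p :: 'a and q :: "nat \<Rightarrow> 'a" and n :: nat
  assumes "c_lattice m"
    and "mult_closed m S"
    and "top \<in> S" and "bot \<notin> S"
    and "n \<ge> 1"
    and "\<forall>i\<in>{1..n}. S_p_primary m S p (q i)"
  shows "S_p_primary m S p (INF i\<in>{1..n}. q i)"
proof -
  have I: "finite {1..n}" "{1..n} \<noteq> {}" using assms(5) by simp_all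
  have primary: "\<forall>i\<in>{1..n}. S_primary m S (q i)"
    and rad: "\<forall>i\<in>{1..n}. lrad m (q i) = p" and "S_prime m S p"
    using assms(6) I(2) unfolding S_p_primary_def by auto
  moreover have "lrad m (INF i\<in>{1..n}. q i) = p" using lrad_INF_eq[OF assms(1) I rad] .
  moreover have "S_primary m S (INF i\<in>{1..n}. q i)"
    using S_primary_INF[OF assms(1,2) I primary rad] .
  ultimately show ?thesis unfolding S_p_primary_def by blast
qed

end
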